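(* Let $n\in\mathbb{N}$, $n\neq1$, and let $f\colon\mathbb{R}\to\mathbb{R}$ be an additive function. Define $\phi\colon\mathbb{R}\to\mathbb{R}$ by $\phi(x)=f(x^{n})-f(x)^{n}$. Assume that $\phi$ is locally regular on $\mathbb{R}$. Then $f$ is linear, i.e. $f(x)=f(1)x$ for all $x\in\mathbb{R}$.
   Context: $\mathbb{N}$ denotes the set of positive integers. A function $f\colon\mathbb{R}\to\mathbb{R}$ is additive if $f(x+y)=f(x)+f(y)$ for all $x,y\in\mathbb{R}$. A real function defined on a subset of $\mathbb{R}$ is called locally regular on its domain if at least one of the following holds: (i) it is bounded on a (Lebesgue) measurable subset of its domain of positive measure; (ii) it is continuous at some point of its domain; (iii) there is a subset of its domain of positive Lebesgue measure on which its restriction is Lebesgue measurable. *)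

theory Defs
  imports "HOL-Analysis.Analysis"
begin

definition additive_fun :: "(real \<Rightarrow> real) \<Rightarrow> bool" where
  "additive_fun f \<longleftrightarrow> (\<forall>x y. f (x + y) = f x + f y)"

definition locally_regular :: "(real \<Rightarrow> real) \<Rightarrow> real set \<Rightarrow> bool" where
  "locally_regular g D \<longleftrightarrow>
     (\<exists>A. A \<subseteq> D \<and> A \<in> sets lebesgue \<and> emeasure lebesgue A > 0 \<and> bounded (g ` A))
   \<or> (\<exists>x\<in>D. continuous (at x within D) g)
   \<or> (\<exists>A. A \<subseteq> D \<and> A \<in> sets lebesgue \<and> emeasure lebesgue A > 0 \<and>
          g \<in> borel_measurable (restrict_space lebesgue A))"

end

theory Submission
  imports Defs "HOL-Computational_Algebra.Polynomial"
begin

text \<open>For rational \<open>q\<close> the map \<open>q \<mapsto> \<phi>(x + q)\<close> is a polynomial of degree \<open>\<le> n\<close> in \<open>q\<close>, with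
  coefficients \<open>(n choose j)(f(x\<^sup>n\<^sup>-\<^sup>j) - f(1)\<^sup>j f(x)\<^sup>n\<^sup>-\<^sup>j)\<close>. Local regularity makes \<open>\<phi>\<close> bounded
  on a compact set \<open>K\<close> of positive measure. By a Steinhaus-type argument there are fixed rational
  nodes \<open>z\<^sub>0, \<dots>, z\<^sub>n\<close> such that for every small \<open>h\<close> some \<open>x\<close> has \<open>x + kh + z\<^sub>i \<in> K\<close> for
  \<open>k = 0, 1, 2\<close>; Lagrange interpolation at the nodes then bounds all coefficients at these points.
  If \<open>f(1)\<^sup>n\<^sup>-\<^sup>1 \<noteq> 1\<close>, the coefficient of \<open>q\<^sup>n\<^sup>-\<^sup>1\<close> is a nonzero multiple of \<open>f(x)\<close>, so \<open>f\<close> is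
  bounded near 0 and hence linear. Otherwise \<open>f(1) = \<plusminus>1\<close> and the coefficient of \<open>q\<^sup>n\<^sup>-\<^sup>2\<close> bounds the
  square defect of \<open>g = f(1) f\<close>, whose second difference in \<open>x\<close> with step \<open>h\<close> is
  \<open>2(g(h\<^sup>2) - g(h)\<^sup>2)\<close>; so \<open>g\<close> is the identity.\<close>

(* Qualified name: in HOL-Analysis the unqualified additive is additivity of set functions. *)
lemma additive_fun_iff_additive: "additive_fun f \<longleftrightarrow> Modules.additive f"
  by (simp add: additive_fun_def Modules.additive_def)

lemma additive_of_nat_mult:
  fixes f :: "'a::ring_1 \<Rightarrow> 'b::ring_1"
  assumes "Modules.additive f"
  shows "f (of_nat N * x) = of_nat N * f x"
  by (induction N) (simp_all add: additive.zero[OF assms] additive.add[OF assms] algebra_simps)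

lemma additive_of_int_mult:
  fixes f :: "'a::ring_1 \<Rightarrow> 'b::ring_1"
  assumes "Modules.additive f"
  shows "f (of_int k * x) = of_int k * f x"
proof (cases k)
  case (nonneg N)
  then show ?thesis using additive_of_nat_mult[OF assms] by simp
next
  case (neg N)
  then show ?thesis
    using additive_of_nat_mult[OF assms, of "Suc N"] additive.minus[OF assms]
    by (metis mult_minus_left of_int_minus of_int_of_nat_eq)
qed

lemma additive_of_rat_mult:
  fixes f :: "'a::field_char_0 \<Rightarrow> 'b::field_char_0"
  assumes "Modules.additive f"
  shows "f (of_rat r * x) = of_rat r * f x"
proof -
  obtain a b where ab: "b > 0" "r = of_int a / of_int b"
    by (cases r) (auto simp: Fract_of_int_quotient)
  have "of_int b * f (of_rat r * x) = f (of_int b * (of_rat r * x))"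
    by (rule additive_of_int_mult[OF assms, symmetric])
  also have "of_int b * (of_rat r * x) = of_int a * x"
    using ab by (simp add: of_rat_divide)
  also have "f (of_int a * x) = of_int a * f x"
    by (rule additive_of_int_mult[OF assms])
  finally have "of_int b * f (of_rat r * x) = of_int a * f x" .
  then have "f (of_rat r * x) = of_int a * f x / of_int b"
    using ab(1) by (simp add: eq_divide_eq mult.commute)
  also have "\<dots> = of_rat r * f x"
    using ab by (simp add: of_rat_divide)
  finally show ?thesis .
qed

lemma additive_Rats_mult:
  fixes f :: "real \<Rightarrow> real"
  assumes "Modules.additive f" "q \<in> \<rat>"
  shows "f (q * x) = q * f x"
  using assms(2) by cases (simp add: additive_of_rat_mult[OF assms(1)])

lemma additive_Rats:
  fixes f :: "real \<Rightarrow> real"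
  assumes "Modules.additive f" "q \<in> \<rat>"
  shows "f q = q * f 1"
  using additive_Rats_mult[OF assms, of 1] by simp

lemma rat_periodic_homogeneous_locally_bounded_eq_0:
  fixes F :: "real \<Rightarrow> real"
  assumes k: "k \<ge> 1"
    and periodic: "\<And>x q. q \<in> \<rat> \<Longrightarrow> F (x + q) = F x"
    and homogeneous: "\<And>x N. F (of_nat N * x) = of_nat N ^ k * F x"
    and "d > 0" and bounded: "\<And>t. \<bar>t\<bar> < d \<Longrightarrow> \<bar>F t\<bar> \<le> B"
  shows "F x = 0"
proof -
  have bounded_everywhere: "\<bar>F y\<bar> \<le> B" for y
  proof -
    obtain q where q: "q \<in> \<rat>" "y - d < q" "q < y"
      using Rats_dense_in_real[of "y - d" y] \<open>d > 0\<close> by auto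
    have "F y = F ((y - q) + q)" by simp
    also have "\<dots> = F (y - q)" using periodic q by blast
    finally show ?thesis using bounded[of "y - q"] q by simp
  qed
  show ?thesis
  proof (rule ccontr)
    assume nz: "F x \<noteq> 0"
    obtain N :: nat where N: "B / \<bar>F x\<bar> < of_nat N" using reals_Archimedean2 by blast
    have "B \<ge> 0" using bounded_everywhere[of 0] by simp
    then have "0 < real N" using N by (smt (verit) divide_nonneg_nonneg abs_ge_zero)
    then have "N \<ge> 1" by simp
    have "B < of_nat N * \<bar>F x\<bar>" using N nz by (simp add: divide_less_eq)
    also have "\<dots> \<le> of_nat N ^ k * \<bar>F x\<bar>"
      using power_increasing[of 1 k "real N"] \<open>N \<ge> 1\<close> k by (intro mult_right_mono) auto
    also have "\<dots> = \<bar>F (of_nat N * x)\<bar>" using homogeneous by (simp add: abs_mult)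
    finally show False using bounded_everywhere[of "of_nat N * x"] by simp
  qed
qed

lemma additive_locally_bounded_imp_linear:
  fixes f :: "real \<Rightarrow> real"
  assumes f: "Modules.additive f" and "d > 0" and bounded: "\<And>t. \<bar>t\<bar> < d \<Longrightarrow> \<bar>f t\<bar> \<le> B"
  shows "f x = f 1 * x"
proof -
  define h where "h x = f x - f 1 * x" for x
  have "h x = 0"
  proof (rule rat_periodic_homogeneous_locally_bounded_eq_0[of 1 h])
    show "h (y + q) = h y" if "q \<in> \<rat>" for y q
      using additive_Rats[OF f that] additive.add[OF f] unfolding h_def by (simp add: algebra_simps)
    show "h (of_nat N * y) = of_nat N ^ 1 * h y" for y N
      using additive_of_nat_mult[OF f] unfolding h_def by (simp add: algebra_simps)
    show "\<bar>h t\<bar> \<le> B + \<bar>f 1\<bar> * d" if "\<bar>t\<bar> < d" for t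
    proof -
      have "\<bar>f 1 * t\<bar> \<le> \<bar>f 1\<bar> * d" using that by (simp add: abs_mult mult_left_mono)
      then show ?thesis using bounded[OF that] unfolding h_def by linarith
    qed
  qed (use \<open>d > 0\<close> in auto)
  then show ?thesis unfolding h_def by simp
qed

text \<open>The square defect is \<open>\<rat>\<close>-periodic and homogeneous of degree 2, so local boundedness
  forces it to vanish; then \<open>g\<close> maps squares to squares, hence is monotone, and it fixes \<open>\<rat>\<close>.\<close>
lemma additive_square_defect_locally_bounded_imp_id:
  fixes g :: "real \<Rightarrow> real"
  assumes g: "Modules.additive g" and g1: "g 1 = 1" and "d > 0"
    and bounded: "\<And>t. \<bar>t\<bar> < d \<Longrightarrow> \<bar>g (t\<^sup>2) - (g t)\<^sup>2\<bar> \<le> B"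
  shows "g x = x"
proof -
  define \<psi> where "\<psi> x = g (x\<^sup>2) - (g x)\<^sup>2" for x
  have g_Rats: "q \<in> \<rat> \<Longrightarrow> g q = q" for q using additive_Rats[OF g, of q] g1 by simp
  have \<psi>_0: "\<psi> y = 0" for y
  proof (rule rat_periodic_homogeneous_locally_bounded_eq_0[of 2 \<psi>])
    show "\<psi> (y + q) = \<psi> y" if q: "q \<in> \<rat>" for y q
    proof -
      have "(y + q)\<^sup>2 = y\<^sup>2 + ((2 * q) * y + q\<^sup>2)" by (simp add: power2_eq_square algebra_simps)
      then have "g ((y + q)\<^sup>2) = g (y\<^sup>2) + (2 * q) * g y + q\<^sup>2"
        using additive.add[OF g] additive_Rats_mult[OF g, of "2 * q" y] g_Rats[of "q\<^sup>2"] q by simp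
      moreover have "g (y + q) = g y + q" using additive.add[OF g] g_Rats q by simp
      ultimately show ?thesis unfolding \<psi>_def by (simp add: power2_eq_square algebra_simps)
    qed
    show "\<psi> (of_nat N * y) = of_nat N ^ 2 * \<psi> y" for y N
      using additive_of_nat_mult[OF g, of N y] additive_of_nat_mult[OF g, of "N\<^sup>2" "y\<^sup>2"]
      unfolding \<psi>_def by (simp add: power_mult_distrib algebra_simps)
  qed (use \<open>d > 0\<close> bounded \<psi>_def in auto)
  have nonneg: "g y \<ge> 0" if "y \<ge> 0" for y
  proof -
    have "g y = (g (sqrt y))\<^sup>2" using \<psi>_0[of "sqrt y"] that unfolding \<psi>_def by simp
    then show ?thesis by simp
  qed
  show ?thesis
  proof (rule ccontr)
    assume "g x \<noteq> x"
    then consider "x < g x" | "g x < x" by linarith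
    then show False
    proof cases
      case 1
      then obtain q where q: "q \<in> \<rat>" "x < q" "q < g x" using Rats_dense_in_real by blast
      then have "g (q - x) = q - g x" using additive.diff[OF g] g_Rats by simp
      then show False using nonneg[of "q - x"] q by simp
    next
      case 2
      then obtain q where q: "q \<in> \<rat>" "g x < q" "q < x" using Rats_dense_in_real by blast
      then have "g (x - q) = g x - q" using additive.diff[OF g] g_Rats by simp
      then show False using nonneg[of "x - q"] q by simp
    qed
  qed
qed

lemma lebesgue_positive_measure_imp_compact_subset:
  fixes A :: "real set"
  assumes A: "A \<in> sets lebesgue" "emeasure lebesgue A > 0"
  obtains K where "compact K" "K \<subseteq> A" "measure lebesgue K > 0"
proof -
  have "\<exists>k::nat. emeasure lebesgue (A \<inter> cball 0 (real k)) > 0"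
  proof (rule ccontr)
    assume "\<not> ?thesis"
    then have "A \<inter> cball 0 (real k) \<in> null_sets lebesgue" for k
      using A by (auto intro!: null_setsI)
    then have "(\<Union>k. A \<inter> cball 0 (real k)) \<in> null_sets lebesgue" by blast
    moreover have "(\<Union>k. A \<inter> cball 0 (real k)) = A"
      by (auto simp: dist_real_def) (meson real_arch_simple)
    ultimately show False using A by (simp add: null_sets_def)
  qed
  then obtain k :: nat where k: "emeasure lebesgue (A \<inter> cball 0 (real k)) > 0" by blast
  define S where "S = A \<inter> cball 0 (real k)"
  have S: "S \<in> lmeasurable" unfolding S_def
    using A by (intro bounded_set_imp_lmeasurable) auto
  have mS: "measure lebesgue S > 0" using k S unfolding S_def[symmetric]
    by (simp add: emeasure_eq_measure2)
  obtain T where T: "closed T" "T \<subseteq> S" "S - T \<in> lmeasurable"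
      "emeasure lebesgue (S - T) < ennreal (measure lebesgue S / 2)"
    using sets_lebesgue_inner_closed[of S "measure lebesgue S / 2"] S mS fmeasurableD by auto
  have "measure lebesgue (S - T) < measure lebesgue S / 2"
    using T(3,4) mS by (simp add: emeasure_eq_measure2 ennreal_less_iff)
  moreover have "measure lebesgue S \<le> measure lebesgue T + measure lebesgue (S - T)"
    using T(2) measure_Un_le[of T lebesgue "S - T"] T(3) borel_closed[OF T(1)] fmeasurableD
    by (simp add: Un_absorb1)
  ultimately have "measure lebesgue T > 0" using mS by linarith
  moreover have "compact T" using T(1,2) unfolding S_def
    by (metis bounded_cball bounded_subset compact_eq_bounded_closed inf_le2 order_trans)
  ultimately show ?thesis using T(2) that unfolding S_def by blast
qed

lemma locally_regular_imp_bounded_on_compact: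
  fixes g :: "real \<Rightarrow> real"
  assumes "locally_regular g UNIV"
  obtains K M where "compact K" "measure lebesgue K > 0" "\<And>x. x \<in> K \<Longrightarrow> \<bar>g x\<bar> \<le> M"
proof -
  have "\<exists>A M. A \<in> sets lebesgue \<and> emeasure lebesgue A > 0 \<and> (\<forall>x\<in>A. \<bar>g x\<bar> \<le> M)"
    using assms unfolding locally_regular_def
  proof (elim disjE exE conjE bexE)
    fix A assume A: "A \<in> sets lebesgue" "emeasure lebesgue A > 0" "bounded (g ` A)"
    then show ?thesis by (metis bounded_iff image_eqI real_norm_def)
  next
    fix x assume "continuous (at x within UNIV) g"
    then obtain d where d: "d > 0" "\<And>y. dist y x < d \<Longrightarrow> dist (g y) (g x) < 1"
      unfolding continuous_at_eps_delta by (meson zero_less_one)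
    define A where "A = {x - d/2 .. x + d/2}"
    have "A \<in> sets lebesgue" unfolding A_def by simp
    moreover have "emeasure lebesgue A = ennreal d"
      using d(1) unfolding A_def by (simp add: emeasure_completion)
    moreover have "\<bar>g y\<bar> \<le> \<bar>g x\<bar> + 1" if "y \<in> A" for y
    proof -
      have "dist y x < d" using that d(1) unfolding A_def dist_real_def by auto
      then have "\<bar>g y - g x\<bar> < 1" using d(2) by (simp add: dist_real_def)
      then show ?thesis by linarith
    qed
    ultimately show ?thesis using d(1) by (metis ennreal_eq_0_iff not_gr_zero less_le_not_le)
  next
    fix A assume A: "A \<in> sets lebesgue" "emeasure lebesgue A > 0"
      and g: "g \<in> borel_measurable (restrict_space lebesgue A)"
    have level: "{y\<in>A. \<bar>g y\<bar> \<le> real k} \<in> sets lebesgue" for k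
    proof -
      have "{y \<in> space (restrict_space lebesgue A). \<bar>g y\<bar> \<le> real k} \<in> sets (restrict_space lebesgue A)"
        using g by measurable
      then show ?thesis using A(1) by (simp add: space_restrict_space sets_restrict_space_iff)
    qed
    have "\<exists>k::nat. emeasure lebesgue {y\<in>A. \<bar>g y\<bar> \<le> real k} > 0"
    proof (rule ccontr)
      assume "\<not> ?thesis"
      then have "{y\<in>A. \<bar>g y\<bar> \<le> real k} \<in> null_sets lebesgue" for k
        using level by (auto intro!: null_setsI)
      then have "(\<Union>k. {y\<in>A. \<bar>g y\<bar> \<le> real k}) \<in> null_sets lebesgue" by blast
      moreover have "(\<Union>k. {y\<in>A. \<bar>g y\<bar> \<le> real k}) = A"
        by auto (meson real_arch_simple)
      ultimately show False using A by (simp add: null_sets_def)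
    qed
    then show ?thesis using level by blast
  qed
  then obtain A M where "A \<in> sets lebesgue" "emeasure lebesgue A > 0" "\<forall>x\<in>A. \<bar>g x\<bar> \<le> M"
    by blast
  moreover obtain K where "compact K" "K \<subseteq> A" "measure lebesgue K > 0"
    using lebesgue_positive_measure_imp_compact_subset calculation(1,2) by blast
  ultimately show ?thesis using that by blast
qed

text \<open>Choose an open \<open>U \<supseteq> K\<close> with \<open>\<mu>(U - K) < \<mu>(K)/(m + 1)\<close>. If \<open>|t|\<close> is below the distance
  from \<open>K\<close> to \<open>-U\<close>, the points of \<open>K\<close> that translation by \<open>t\<close> moves out of \<open>K\<close> form a set of
  measure at most \<open>\<mu>(U - K)\<close>, and at most \<open>m\<close> such sets cannot cover \<open>K\<close>.\<close>
lemma steinhaus_common_translate: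
  fixes K :: "real set"
  assumes K: "compact K" "measure lebesgue K > 0"
  obtains \<delta> where "\<delta> > 0"
    "\<And>T. finite T \<Longrightarrow> card T \<le> m \<Longrightarrow> (\<And>t. t \<in> T \<Longrightarrow> \<bar>t\<bar> < \<delta>) \<Longrightarrow> \<exists>x\<in>K. \<forall>t\<in>T. x + t \<in> K"
proof -
  define e where "e = measure lebesgue K / (real m + 1)"
  have e: "e > 0" using K unfolding e_def by simp
  have Kl: "K \<in> lmeasurable" using K lmeasurable_compact by blast
  obtain U where U: "open U" "K \<subseteq> U" "U - K \<in> lmeasurable" "emeasure lebesgue (U - K) < ennreal e"
    using sets_lebesgue_outer_open[of K e] Kl e fmeasurableD by blast
  have UKm: "measure lebesgue (U - K) < e"
    using U(3,4) e by (simp add: emeasure_eq_measure2 ennreal_less_iff)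
  have Ul: "U \<in> lmeasurable" using Kl U(3) by (metis Diff_partition U(2) fmeasurable.Un)
  have mU: "measure lebesgue U = measure lebesgue K + measure lebesgue (U - K)"
    using measure_Un2[OF Kl Ul] U(2) by (simp add: Un_absorb1)
  obtain d where d: "d > 0" "\<forall>x\<in>K. \<forall>y\<in>-U. d \<le> dist x y"
    using separate_compact_closed[of K "-U"] K U by auto
  have leave_small: "measure lebesgue {x\<in>K. x + t \<notin> K} \<le> e" if t: "\<bar>t\<bar> < d" for t
  proof -
    define Kt where "Kt = (+) (- t) ` K"
    have Kt_iff: "y \<in> Kt \<longleftrightarrow> y + t \<in> K" for y
      unfolding Kt_def by (auto simp: image_iff intro: bexI[of _ "y + t"])
    have Ktl: "Kt \<in> lmeasurable" unfolding Kt_def using Kl measurable_translation by blast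
    have "Kt \<subseteq> U"
    proof
      fix y assume "y \<in> Kt"
      then have "y + t \<in> K" using Kt_iff by blast
      then show "y \<in> U" using d(2) t by (force simp: dist_real_def)
    qed
    then have "measure lebesgue (Kt \<union> K) \<le> measure lebesgue U"
      using U(2) Ul Ktl Kl by (intro measure_mono_fmeasurable) (auto simp: fmeasurableD)
    moreover have "measure lebesgue (Kt \<union> K) = measure lebesgue Kt + measure lebesgue (K - Kt)"
      by (rule measure_Un2[OF Ktl Kl])
    moreover have "measure lebesgue Kt = measure lebesgue K" unfolding Kt_def by (rule measure_translation)
    ultimately have "measure lebesgue (K - Kt) \<le> e" using mU UKm by linarith
    moreover have "K - Kt = {x\<in>K. x + t \<notin> K}" using Kt_iff by blast
    ultimately show ?thesis by simp
  qed
  show ?thesis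
  proof (rule that[OF d(1)])
    fix T :: "real set"
    assume T: "finite T" "card T \<le> m" "\<And>t. t \<in> T \<Longrightarrow> \<bar>t\<bar> < d"
    show "\<exists>x\<in>K. \<forall>t\<in>T. x + t \<in> K"
    proof (rule ccontr)
      assume "\<not> ?thesis"
      then have K_cover: "K = (\<Union>t\<in>T. {x\<in>K. x + t \<notin> K})" by blast
      have "{x\<in>K. x + t \<notin> K} \<in> sets lebesgue" for t
      proof -
        have "{x\<in>K. x + t \<notin> K} = K - (+) (- t) ` K"
          by (auto simp: image_iff) (metis add_diff_cancel_right')
        then show ?thesis using Kl measurable_translation[OF Kl, of "-t"] by (auto simp: fmeasurableD)
      qed
      then have "measure lebesgue K \<le> (\<Sum>t\<in>T. measure lebesgue {x\<in>K. x + t \<notin> K})"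
        using measure_UNION_le[of T "\<lambda>t. {x\<in>K. x + t \<notin> K}" lebesgue] T(1) K_cover by simp
      also have "\<dots> \<le> card T * e" using leave_small T sum_mono[of T _ "\<lambda>_. e"] by simp
      also have "\<dots> \<le> m * e" using T e by (intro mult_right_mono) auto
      also have "\<dots> < measure lebesgue K" using K unfolding e_def by (simp add: field_simps)
      finally show False by simp
    qed
  qed
qed

lemma steinhaus_progressions:
  fixes K :: "real set"
  assumes "compact K" "measure lebesgue K > 0"
  obtains \<delta> where "\<delta> > 0"
    "\<And>Z h. finite Z \<Longrightarrow> card Z \<le> m \<Longrightarrow> (\<And>z. z \<in> Z \<Longrightarrow> \<bar>z\<bar> < \<delta>) \<Longrightarrow> \<bar>h\<bar> < \<delta> \<Longrightarrow>
      \<exists>x. \<forall>z\<in>Z. \<forall>k<3. x + real k * h + z \<in> K"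
proof -
  obtain \<delta> where \<delta>: "\<delta> > 0" and common:
    "\<And>T. finite T \<Longrightarrow> card T \<le> 3 * m \<Longrightarrow> (\<And>t. t \<in> T \<Longrightarrow> \<bar>t\<bar> < \<delta>) \<Longrightarrow> \<exists>x\<in>K. \<forall>t\<in>T. x + t \<in> K"
    using steinhaus_common_translate[OF assms, of "3 * m"] by blast
  show ?thesis
  proof (rule that[of "\<delta> / 3"])
    fix Z :: "real set" and h
    assume Z: "finite Z" "card Z \<le> m" "\<And>z. z \<in> Z \<Longrightarrow> \<bar>z\<bar> < \<delta> / 3" and h: "\<bar>h\<bar> < \<delta> / 3"
    define T where "T = (\<lambda>(z, k). real k * h + z) ` (Z \<times> {..<3::nat})"
    have "finite T" unfolding T_def using Z(1) by simp
    have "card T \<le> card (Z \<times> {..<3::nat})" unfolding T_def by (rule card_image_le) (simp add: Z(1))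
    then have "card T \<le> 3 * m" using Z(2) by (simp add: card_cartesian_product)
    moreover have "\<bar>t\<bar> < \<delta>" if "t \<in> T" for t
    proof -
      obtain z k where zk: "z \<in> Z" "k < (3::nat)" "t = real k * h + z" using \<open>t \<in> T\<close> unfolding T_def by auto
      have "\<bar>real k * h\<bar> \<le> 2 * \<bar>h\<bar>" using zk(2) by (simp add: abs_mult mult_right_mono)
      then show ?thesis using Z(3)[OF zk(1)] zk(3) h by linarith
    qed
    ultimately obtain x where x: "\<forall>t\<in>T. x + t \<in> K" using common[OF \<open>finite T\<close>] by blast
    show "\<exists>x. \<forall>z\<in>Z. \<forall>k<3. x + real k * h + z \<in> K"
    proof (intro exI[of _ x] ballI allI impI)
      fix z k assume "z \<in> Z" "k < (3::nat)"
      then have "real k * h + z \<in> T" unfolding T_def by force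
      then show "x + real k * h + z \<in> K" using x by (simp add: add.assoc)
    qed
  qed (use \<delta> in simp)
qed

definition lagrange_basis :: "'a::field set \<Rightarrow> 'a \<Rightarrow> 'a poly" where
  "lagrange_basis S s = (\<Prod>t\<in>S - {s}. smult (1 / (s - t)) [:- t, 1:])"

lemma poly_lagrange_basis:
  fixes S :: "'a::field set"
  assumes "finite S" "s \<in> S" "u \<in> S"
  shows "poly (lagrange_basis S s) u = (if u = s then 1 else 0)"
proof -
  have "poly (lagrange_basis S s) u = (\<Prod>t\<in>S - {s}. (u - t) / (s - t))"
    unfolding lagrange_basis_def poly_prod by (intro prod.cong refl) (simp add: diff_divide_distrib[symmetric])
  also have "\<dots> = (if u = s then 1 else 0)"
    using assms by (auto intro!: prod.neutral prod_zero bexI[of _ u])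
  finally show ?thesis .
qed

lemma degree_lagrange_basis:
  assumes "finite S" "s \<in> S"
  shows "degree (lagrange_basis S s) \<le> card S - 1"
proof -
  have "degree (lagrange_basis S s) \<le> sum (degree \<circ> (\<lambda>t. smult (1 / (s - t)) [:- t, 1:])) (S - {s})"
    unfolding lagrange_basis_def by (rule degree_prod_sum_le) (simp add: assms(1))
  also have "\<dots> \<le> (\<Sum>t\<in>S - {s}. 1)"
    by (intro sum_mono) (simp add: order_trans[OF degree_smult_le])
  also have "\<dots> = card S - 1" using assms by simp
  finally show ?thesis .
qed

lemma lagrange_interpolation:
  fixes p :: "'a::field poly"
  assumes "finite S" "degree p < card S"
  shows "p = (\<Sum>s\<in>S. smult (poly p s) (lagrange_basis S s))"
proof (rule poly_eqI_degree[of S])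
  fix u assume "u \<in> S"
  have "poly (\<Sum>s\<in>S. smult (poly p s) (lagrange_basis S s)) u = (\<Sum>s\<in>S. if s = u then poly p s else 0)"
    unfolding poly_sum using assms(1) \<open>u \<in> S\<close> by (intro sum.cong refl) (auto simp: poly_lagrange_basis)
  then show "poly p u = poly (\<Sum>s\<in>S. smult (poly p s) (lagrange_basis S s)) u"
    using assms(1) \<open>u \<in> S\<close> by simp
next
  have "degree (smult (poly p s) (lagrange_basis S s)) < card S" if "s \<in> S" for s
    using degree_lagrange_basis[OF assms(1) that] degree_smult_le assms(2)
    by (metis diff_less le_less_trans order_le_less_trans zero_less_one not_less_zero gr_zeroI)
  then show "degree (\<Sum>s\<in>S. smult (poly p s) (lagrange_basis S s)) < card S"
    using assms(2) by (intro degree_sum_less) auto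
qed (use assms in auto)

lemma poly_coeff_bounded_by_values:
  fixes S :: "real set"
  assumes "finite S"
  obtains C where
    "\<And>p M. degree p < card S \<Longrightarrow> (\<And>s. s \<in> S \<Longrightarrow> \<bar>poly p s\<bar> \<le> M) \<Longrightarrow> \<bar>coeff p j\<bar> \<le> C * M"
proof
  fix p :: "real poly" and M
  assume deg: "degree p < card S" and values_bounded: "\<And>s. s \<in> S \<Longrightarrow> \<bar>poly p s\<bar> \<le> M"
  have "coeff p j = (\<Sum>s\<in>S. poly p s * coeff (lagrange_basis S s) j)"
    using arg_cong[where f = "\<lambda>q. coeff q j", OF lagrange_interpolation[OF assms deg]]
    by (simp add: coeff_sum)
  then have "\<bar>coeff p j\<bar> \<le> (\<Sum>s\<in>S. \<bar>poly p s\<bar> * \<bar>coeff (lagrange_basis S s) j\<bar>)"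
    by (simp add: abs_mult[symmetric] sum_abs)
  also have "\<dots> \<le> (\<Sum>s\<in>S. M * \<bar>coeff (lagrange_basis S s) j\<bar>)"
    using values_bounded by (intro sum_mono mult_right_mono) auto
  also have "\<dots> = (\<Sum>s\<in>S. \<bar>coeff (lagrange_basis S s) j\<bar>) * M"
    by (simp add: sum_distrib_left mult.commute)
  finally show "\<bar>coeff p j\<bar> \<le> (\<Sum>s\<in>S. \<bar>coeff (lagrange_basis S s) j\<bar>) * M" .
qed

text \<open>For rational \<open>q\<close>, \<open>binomial_defect n f x j\<close> is the coefficient of \<open>q\<^sup>j\<close> in
  \<open>f((x + q)\<^sup>n) - f(x + q)\<^sup>n\<close>.\<close>
definition binomial_defect :: "nat \<Rightarrow> (real \<Rightarrow> real) \<Rightarrow> real \<Rightarrow> nat \<Rightarrow> real" where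
  "binomial_defect n f x j = of_nat (n choose j) * (f (x ^ (n - j)) - f 1 ^ j * f x ^ (n - j))"

definition defect_poly :: "nat \<Rightarrow> (real \<Rightarrow> real) \<Rightarrow> real \<Rightarrow> real poly" where
  "defect_poly n f x = (\<Sum>j\<le>n. monom (binomial_defect n f x j) j)"

lemma degree_defect_poly: "degree (defect_poly n f x) \<le> n"
  unfolding defect_poly_def by (intro degree_sum_le) (auto intro: order_trans[OF degree_monom_le])

lemma coeff_defect_poly: "j \<le> n \<Longrightarrow> coeff (defect_poly n f x) j = binomial_defect n f x j"
  unfolding defect_poly_def by (simp add: coeff_sum coeff_monom)

lemma poly_defect_poly_Rats:
  assumes f: "Modules.additive f" and q: "q \<in> \<rat>"
  shows "poly (defect_poly n f x) q = f ((x + q) ^ n) - f (x + q) ^ n"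
proof -
  have "f ((x + q) ^ n) = f (\<Sum>j\<le>n. (of_nat (n choose j) * q ^ j) * x ^ (n - j))"
    using binomial_ring[of q x n] by (simp add: add.commute mult.assoc)
  also have "\<dots> = (\<Sum>j\<le>n. (of_nat (n choose j) * q ^ j) * f (x ^ (n - j)))"
    using q by (simp add: additive.sum[OF f] additive_Rats_mult[OF f])
  finally have "f ((x + q) ^ n) = \<dots>" .
  moreover have "f (x + q) = q * f 1 + f x" using additive.add[OF f] additive_Rats[OF f q] by simp
  then have "f (x + q) ^ n = (\<Sum>j\<le>n. of_nat (n choose j) * (q * f 1) ^ j * f x ^ (n - j))"
    using binomial_ring[of "q * f 1" "f x" n] by simp
  ultimately show ?thesis
    unfolding defect_poly_def binomial_defect_def
    by (simp add: poly_sum poly_monom sum_subtractf[symmetric] algebra_simps power_mult_distrib)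
qed

lemma real_power_eq_1_imp_square_eq_1:
  fixes c :: real
  assumes "c ^ m = 1" "m \<ge> 1"
  shows "c * c = 1"
proof -
  have "\<bar>c\<bar> = 1" using power_eq_1_iff[OF assms(1)] assms(2) by simp
  then show ?thesis by (cases "c \<ge> 0") auto
qed

lemma binomial_defect_n_minus_1_bounded:
  assumes "n \<ge> 1" "f 1 ^ (n - 1) \<noteq> 1" "\<forall>y\<in>G. \<bar>binomial_defect n f y (n - 1)\<bar> \<le> C"
  shows "\<forall>y\<in>G. \<bar>f y\<bar> \<le> C / \<bar>real n * (1 - f 1 ^ (n - 1))\<bar>"
proof
  fix y assume "y \<in> G"
  define c where "c = real n * (1 - f 1 ^ (n - 1))"
  have "n choose (n - 1) = n" using binomial_symmetric[of 1 n] assms(1) by simp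
  then have "binomial_defect n f y (n - 1) = c * f y"
    using assms(1) unfolding binomial_defect_def c_def by (simp add: algebra_simps)
  then have "\<bar>c\<bar> * \<bar>f y\<bar> \<le> C" using assms(3) \<open>y \<in> G\<close> by (metis abs_mult)
  moreover have "c \<noteq> 0" using assms(1,2) unfolding c_def by simp
  ultimately show "\<bar>f y\<bar> \<le> C / \<bar>c\<bar>" by (simp add: le_divide_eq mult.commute)
qed

lemma binomial_defect_n_minus_2_bounded:
  assumes "n \<ge> 2" "f 1 ^ (n - 1) = 1" "\<forall>y\<in>G. \<bar>binomial_defect n f y (n - 2)\<bar> \<le> C"
  shows "\<forall>y\<in>G. \<bar>f (y\<^sup>2) - f 1 * (f y)\<^sup>2\<bar> \<le> C"
proof
  fix y assume "y \<in> G"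
  define D where "D = f (y\<^sup>2) - f 1 * (f y)\<^sup>2"
  have "f 1 * f 1 = 1" using real_power_eq_1_imp_square_eq_1 assms(1,2) by simp
  then have "f 1 ^ (n - 2) = f 1 ^ (n - 2) * f 1 * f 1" by (simp add: mult.assoc)
  also have "\<dots> = f 1 ^ (n - 1) * f 1"
    using assms(1) by (simp add: power_Suc2[symmetric] Suc_diff_Suc numeral_2_eq_2)
  finally have "f 1 ^ (n - 2) = f 1" using assms(2) by simp
  moreover have "n choose (n - 2) = n choose 2" using binomial_symmetric[of 2 n] assms(1) by simp
  ultimately have "binomial_defect n f y (n - 2) = real (n choose 2) * D"
    using assms(1) unfolding binomial_defect_def D_def by simp
  then have "real (n choose 2) * \<bar>D\<bar> \<le> C" using assms(3) \<open>y \<in> G\<close> by (metis abs_mult abs_of_nat)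
  moreover have "real (n choose 2) \<ge> 1" using assms(1) by (simp add: Suc_leI)
  ultimately show "\<bar>D\<bar> \<le> C" using mult_right_mono[of 1 "real (n choose 2)" "\<bar>D\<bar>"] by simp
qed

lemma binomial_defects_bounded_on_progressions:
  fixes f :: "real \<Rightarrow> real"
  assumes f: "Modules.additive f" and K: "compact K" "measure lebesgue K > 0"
    and bounded: "\<And>x. x \<in> K \<Longrightarrow> \<bar>f (x ^ n) - f x ^ n\<bar> \<le> M"
  obtains G \<delta> where "\<delta> > 0" "\<And>h. \<bar>h\<bar> < \<delta> \<Longrightarrow> \<exists>x. x \<in> G \<and> x + h \<in> G \<and> x + 2 * h \<in> G"
    "\<And>j. j \<le> n \<Longrightarrow> \<exists>C. \<forall>y\<in>G. \<bar>binomial_defect n f y j\<bar> \<le> C"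
proof -
  obtain \<delta> where \<delta>: "\<delta> > 0" and progressions: "\<And>Z h. finite Z \<Longrightarrow> card Z \<le> n + 1 \<Longrightarrow>
      (\<And>z. z \<in> Z \<Longrightarrow> \<bar>z\<bar> < \<delta>) \<Longrightarrow> \<bar>h\<bar> < \<delta> \<Longrightarrow> \<exists>x. \<forall>z\<in>Z. \<forall>k<3. x + real k * h + z \<in> K"
    using steinhaus_progressions[OF K, of "n + 1"] by blast
  obtain r where r: "r \<in> \<rat>" "0 < r" "r < \<delta> / (n + 1)"
    using Rats_dense_in_real[of 0 "\<delta> / (n + 1)"] \<delta> by auto
  define Z where "Z = (\<lambda>i. real i * r) ` {..n}"
  have "finite Z" unfolding Z_def by simp
  have card_Z: "card Z = n + 1" unfolding Z_def using r(2) by (subst card_image) (auto intro: inj_onI)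
  have Z_small: "\<bar>z\<bar> < \<delta>" if z: "z \<in> Z" for z
  proof -
    obtain i where i: "i \<le> n" "z = real i * r" using z unfolding Z_def by auto
    then have "\<bar>z\<bar> \<le> real n * r" using r(2) by (simp add: mult_right_mono)
    also have "\<dots> < (n + 1) * (\<delta> / (n + 1))" using r(2,3) by (intro mult_strict_mono') auto
    finally show ?thesis by simp
  qed
  define G where "G = {y. \<forall>z\<in>Z. y + z \<in> K}"
  show thesis
  proof (rule that[OF \<delta>])
    fix h assume "\<bar>h\<bar> < \<delta>"
    then obtain x where x: "\<forall>z\<in>Z. \<forall>k<3. x + real k * h + z \<in> K"
      using progressions[OF \<open>finite Z\<close> _ Z_small] card_Z by (metis order_refl)
    then have "x + real k * h \<in> G" if "k < 3" for k unfolding G_def using that by auto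
    from this[of 0] this[of 1] this[of 2] show "\<exists>x. x \<in> G \<and> x + h \<in> G \<and> x + 2 * h \<in> G" by auto
  next
    fix j assume "j \<le> n"
    obtain C where C: "\<And>p M. degree p < card Z \<Longrightarrow> (\<And>s. s \<in> Z \<Longrightarrow> \<bar>poly p s\<bar> \<le> M) \<Longrightarrow> \<bar>coeff p j\<bar> \<le> C * M"
      using poly_coeff_bounded_by_values[OF \<open>finite Z\<close>] by blast
    have "\<bar>binomial_defect n f y j\<bar> \<le> C * M" if "y \<in> G" for y
    proof -
      have "\<bar>poly (defect_poly n f y) z\<bar> \<le> M" if "z \<in> Z" for z
      proof -
        have "z \<in> \<rat>" using \<open>z \<in> Z\<close> r(1) unfolding Z_def by auto
        then show ?thesis using poly_defect_poly_Rats[OF f] bounded \<open>y \<in> G\<close> that unfolding G_def by simp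
      qed
      moreover have "degree (defect_poly n f y) < card Z" using degree_defect_poly card_Z by (simp add: le_imp_less_Suc)
      ultimately show ?thesis using C coeff_defect_poly[OF \<open>j \<le> n\<close>] by metis
    qed
    then show "\<exists>C. \<forall>y\<in>G. \<bar>binomial_defect n f y j\<bar> \<le> C" by blast
  qed
qed

lemma square_defect_second_difference:
  fixes g :: "real \<Rightarrow> real"
  assumes g: "Modules.additive g"
  shows "(g ((x + 2 * h)\<^sup>2) - (g (x + 2 * h))\<^sup>2) - 2 * (g ((x + h)\<^sup>2) - (g (x + h))\<^sup>2)
           + (g (x\<^sup>2) - (g x)\<^sup>2) = 2 * (g (h\<^sup>2) - (g h)\<^sup>2)"
proof -
  have scale: "g (of_nat N * y) = of_nat N * g y" for N y by (rule additive_of_nat_mult[OF g])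
  have "(x + 2 * h)\<^sup>2 = x\<^sup>2 + (4 * (x * h) + 4 * h\<^sup>2)" and "(x + h)\<^sup>2 = x\<^sup>2 + (2 * (x * h) + h\<^sup>2)"
    by (simp_all add: power2_eq_square algebra_simps)
  then have "g ((x + 2 * h)\<^sup>2) = g (x\<^sup>2) + 4 * g (x * h) + 4 * g (h\<^sup>2)"
    and "g ((x + h)\<^sup>2) = g (x\<^sup>2) + 2 * g (x * h) + g (h\<^sup>2)"
    using scale[of 4] scale[of 2] additive.add[OF g] by simp_all
  moreover have "g (x + 2 * h) = g x + 2 * g h" and "g (x + h) = g x + g h"
    using scale[of 2] additive.add[OF g] by simp_all
  ultimately show ?thesis by (simp add: power2_eq_square algebra_simps)
qed

lemma additive_bounded_on_progressions_imp_linear: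
  fixes f :: "real \<Rightarrow> real"
  assumes f: "Modules.additive f" and "\<delta> > 0"
    and progressions: "\<And>h. \<bar>h\<bar> < \<delta> \<Longrightarrow> \<exists>x. x \<in> G \<and> x + h \<in> G"
    and bounded: "\<forall>y\<in>G. \<bar>f y\<bar> \<le> B"
  shows "f x = f 1 * x"
proof (rule additive_locally_bounded_imp_linear[OF f \<open>\<delta> > 0\<close>])
  fix h :: real assume "\<bar>h\<bar> < \<delta>"
  then obtain y where y: "y \<in> G" "y + h \<in> G" using progressions by blast
  have "f h = f (y + h) - f y" using additive.add[OF f, of y h] by simp
  moreover have "\<bar>f y\<bar> \<le> B" "\<bar>f (y + h)\<bar> \<le> B" using bounded y by auto
  ultimately show "\<bar>f h\<bar> \<le> 2 * B" by (simp add: abs_le_iff)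
qed

lemma additive_square_defect_bounded_on_progressions_imp_linear:
  fixes f :: "real \<Rightarrow> real"
  assumes f: "Modules.additive f" and unit: "f 1 * f 1 = 1" and "\<delta> > 0"
    and progressions: "\<And>h. \<bar>h\<bar> < \<delta> \<Longrightarrow> \<exists>x. x \<in> G \<and> x + h \<in> G \<and> x + 2 * h \<in> G"
    and bounded: "\<forall>y\<in>G. \<bar>f (y\<^sup>2) - f 1 * (f y)\<^sup>2\<bar> \<le> B"
  shows "f x = f 1 * x"
proof -
  define g where "g y = f 1 * f y" for y
  have g: "Modules.additive g"
    using additive.add[OF f] by unfold_locales (simp add: g_def algebra_simps)
  have "g 1 = 1" using unit unfolding g_def by simp
  have "f 1 = 1 \<or> f 1 = - 1" using unit square_eq_1_iff by blast
  then have "\<bar>f 1\<bar> = 1" by auto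
  have g_bounded: "\<bar>g (y\<^sup>2) - (g y)\<^sup>2\<bar> \<le> B" if "y \<in> G" for y
  proof -
    have "g (y\<^sup>2) - (g y)\<^sup>2 = f 1 * (f (y\<^sup>2) - f 1 * (f y)\<^sup>2)"
      using unit unfolding g_def by (simp add: power2_eq_square algebra_simps)
    moreover have "\<bar>f (y\<^sup>2) - f 1 * (f y)\<^sup>2\<bar> \<le> B" using bounded that by blast
    ultimately show ?thesis using \<open>\<bar>f 1\<bar> = 1\<close> by (simp add: abs_mult)
  qed
  have "g x = x"
  proof (rule additive_square_defect_locally_bounded_imp_id[OF g \<open>g 1 = 1\<close> \<open>\<delta> > 0\<close>])
    fix h :: real assume "\<bar>h\<bar> < \<delta>"
    then obtain y where y: "y \<in> G" "y + h \<in> G" "y + 2 * h \<in> G" using progressions by blast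
    define D where "D t = g (t\<^sup>2) - (g t)\<^sup>2" for t
    have "D (y + 2 * h) - 2 * D (y + h) + D y = 2 * D h"
      using square_defect_second_difference[OF g, of y h] unfolding D_def .
    moreover have "\<bar>D t\<bar> \<le> B" if "t \<in> G" for t using g_bounded[OF that] unfolding D_def .
    ultimately show "\<bar>g (h\<^sup>2) - (g h)\<^sup>2\<bar> \<le> 2 * B"
      using y unfolding D_def[symmetric] by (smt (verit))
  qed
  then show ?thesis using unit unfolding g_def by (metis mult.assoc mult_1)
qed

theorem mainTheorem6:
  fixes n :: nat and f :: "real \<Rightarrow> real"
  assumes "n \<ge> 1" and "n \<noteq> 1"
    and "additive_fun f"
    and "locally_regular (\<lambda>x. f (x ^ n) - (f x) ^ n) UNIV"
  shows "\<forall>x. f x = f 1 * x"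
proof -
  have f: "Modules.additive f" using assms(3) by (simp add: additive_fun_iff_additive)
  have n: "n \<ge> 2" using assms(1,2) by linarith
  obtain K M where K: "compact K" "measure lebesgue K > 0"
    and M: "\<And>x. x \<in> K \<Longrightarrow> \<bar>f (x ^ n) - f x ^ n\<bar> \<le> M"
    using locally_regular_imp_bounded_on_compact[OF assms(4)] by blast
  obtain G \<delta> where \<delta>: "\<delta> > 0"
    and progressions: "\<And>h. \<bar>h\<bar> < \<delta> \<Longrightarrow> \<exists>x. x \<in> G \<and> x + h \<in> G \<and> x + 2 * h \<in> G"
    and defects: "\<And>j. j \<le> n \<Longrightarrow> \<exists>C. \<forall>y\<in>G. \<bar>binomial_defect n f y j\<bar> \<le> C"
    using binomial_defects_bounded_on_progressions[OF f K M] by metis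
  show ?thesis
  proof (cases "f 1 ^ (n - 1) = 1")
    case False
    obtain C where "\<forall>y\<in>G. \<bar>binomial_defect n f y (n - 1)\<bar> \<le> C" using defects[of "n - 1"] by auto
    then have "\<forall>y\<in>G. \<bar>f y\<bar> \<le> C / \<bar>real n * (1 - f 1 ^ (n - 1))\<bar>"
      using binomial_defect_n_minus_1_bounded False assms(1) by blast
    moreover have "\<And>h. \<bar>h\<bar> < \<delta> \<Longrightarrow> \<exists>x. x \<in> G \<and> x + h \<in> G" using progressions by blast
    ultimately show ?thesis using additive_bounded_on_progressions_imp_linear[OF f \<delta>] by blast
  next
    case True
    then have unit: "f 1 * f 1 = 1" using real_power_eq_1_imp_square_eq_1 n by simp
    obtain C where "\<forall>y\<in>G. \<bar>binomial_defect n f y (n - 2)\<bar> \<le> C" using defects[of "n - 2"] by auto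
    then have "\<forall>y\<in>G. \<bar>f (y\<^sup>2) - f 1 * (f y)\<^sup>2\<bar> \<le> C"
      using binomial_defect_n_minus_2_bounded True n by blast
    then show ?thesis using additive_square_defect_bounded_on_progressions_imp_linear[OF f unit \<delta> progressions] by blast
  qed
qed

end
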